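(* Let $V$ be a real vector space with two inner products $\langle\cdot,\cdot\rangle_1$ and $\langle\cdot,\cdot\rangle_2$, and let $\theta_0\in(0,\pi)$. Suppose that for all nonzero $x,y\in V$, the angle between $x$ and $y$ with respect to $\langle\cdot,\cdot\rangle_1$ is $\theta_0$ if and only if the angle between them with respect to $\langle\cdot,\cdot\rangle_2$ is $\theta_0$. Then there is $c>0$ such that $\langle x,y\rangle_2=c\langle x,y\rangle_1$ for all $x,y\in V$.
   Context: For an inner product $\langle\cdot,\cdot\rangle$ on a real vector space with norm $\|x\|=\sqrt{\langle x,x\rangle}$, the angle between nonzero vectors $x,y$ is the unique $\theta\in[0,\pi]$ with $\cos\theta=\langle x,y\rangle/(\|x\|\|y\|)$. *)

theory Defs
  imports "HOL-Analysis.Analysis"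
begin

definition is_inner_product :: "('a::real_vector \<Rightarrow> 'a \<Rightarrow> real) \<Rightarrow> bool" where
  "is_inner_product ip \<longleftrightarrow>
     (\<forall>x y. ip x y = ip y x) \<and>
     (\<forall>x y z. ip (x + y) z = ip x z + ip y z) \<and>
     (\<forall>r x y. ip (scaleR r x) y = r * ip x y) \<and>
     (\<forall>x. x \<noteq> 0 \<longrightarrow> ip x x > 0)"

definition ip_norm :: "('a \<Rightarrow> 'a \<Rightarrow> real) \<Rightarrow> 'a \<Rightarrow> real" where
  "ip_norm ip x = sqrt (ip x x)"

definition ip_angle :: "('a \<Rightarrow> 'a \<Rightarrow> real) \<Rightarrow> 'a \<Rightarrow> 'a \<Rightarrow> real" where
  "ip_angle ip x y = arccos (ip x y / (ip_norm ip x * ip_norm ip y))"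

end

theory Submission imports Defs begin

text \<open>Let \<open>a = cos \<theta>\<^sub>0\<close>, so \<open>a\<^sup>2 < 1\<close>, and call \<open>y\<close> a partner of \<open>x\<close> if it has the same
  \<open>ip1\<close>-length and makes the angle \<open>\<theta>\<^sub>0\<close> with \<open>x\<close>. A partner of \<open>x\<close> also has the same
  \<open>ip2\<close>-length: for \<open>a = 0\<close> because \<open>x + y \<bottom> x - y\<close>, otherwise by comparing \<open>y\<close> with its
  reflection \<open>2a x - y\<close>, which is a partner too. Hence \<open>ip2\<close> is a fixed multiple of \<open>ip1\<close>
  on the plane spanned by \<open>x\<close> and a partner, and every vector lies in such a plane (or on the
  line through \<open>x\<close>). So \<open>ip2 z z / ip1 z z\<close> is constant, and polarization concludes.\<close>

definition cos_partner :: "('a \<Rightarrow> 'a \<Rightarrow> real) \<Rightarrow> real \<Rightarrow> 'a \<Rightarrow> 'a \<Rightarrow> bool" where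
  "cos_partner ip a x y \<longleftrightarrow> ip y y = ip x x \<and> ip x y = a * ip x x"

locale inner_product_form =
  fixes ip :: "'a::real_vector \<Rightarrow> 'a \<Rightarrow> real"
  assumes inner_product: "is_inner_product ip"
begin

lemma commute: "ip x y = ip y x"
  using inner_product unfolding is_inner_product_def by blast

lemma add_left: "ip (x + y) z = ip x z + ip y z"
  using inner_product unfolding is_inner_product_def by blast

lemma scaleR_left: "ip (r *\<^sub>R x) y = r * ip x y"
  using inner_product unfolding is_inner_product_def by blast

lemma self_pos: "x \<noteq> 0 \<Longrightarrow> ip x x > 0"
  using inner_product unfolding is_inner_product_def by blast

lemma add_right: "ip z (x + y) = ip z x + ip z y"
  by (metis commute add_left)

lemma scaleR_right: "ip y (r *\<^sub>R x) = r * ip y x"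
  by (metis commute scaleR_left)

lemma zero_left: "ip 0 y = 0"
  using scaleR_left[of 0 0 y] by simp

lemma diff_right: "ip z (x - y) = ip z x - ip z y"
  using add_right[of z x "- y"] scaleR_right[of z "- 1" y] by simp

lemma self_nonneg: "ip x x \<ge> 0"
  using self_pos[of x] zero_left by (cases "x = 0") auto

lemma self_eq_0_iff: "ip x x = 0 \<longleftrightarrow> x = 0"
  using self_pos[of x] zero_left by force

lemma norm_pos: "x \<noteq> 0 \<Longrightarrow> ip_norm ip x > 0"
  by (simp add: ip_norm_def self_pos)

lemma power2_norm: "(ip_norm ip x)\<^sup>2 = ip x x"
  by (simp add: ip_norm_def self_nonneg)

lemma combination_expand:
  "ip (\<alpha> *\<^sub>R x + \<beta> *\<^sub>R y) (\<gamma> *\<^sub>R x + \<delta> *\<^sub>R y)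
     = \<alpha> * \<gamma> * ip x x + (\<alpha> * \<delta> + \<beta> * \<gamma>) * ip x y + \<beta> * \<delta> * ip y y"
  by (simp add: add_left add_right scaleR_left scaleR_right commute[of y x] algebra_simps)

lemma Cauchy_Schwarz: "(ip x y)\<^sup>2 \<le> ip x x * ip y y"
proof (cases "y = 0")
  case True
  then show ?thesis using zero_left commute[of x 0] by simp
next
  case False
  define t where "t = ip x y / ip y y"
  have pos: "ip y y > 0" using self_pos False by simp
  have "0 \<le> ip (1 *\<^sub>R x + (- t) *\<^sub>R y) (1 *\<^sub>R x + (- t) *\<^sub>R y)"
    by (rule self_nonneg)
  also have "\<dots> = ip x x - (ip x y)\<^sup>2 / ip y y"
    unfolding combination_expand using pos by (simp add: t_def field_simps power2_eq_square)
  finally show ?thesis using pos by (simp add: field_simps)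
qed

lemma abs_le_norm_mult: "\<bar>ip x y\<bar> \<le> ip_norm ip x * ip_norm ip y"
proof -
  have "\<bar>ip x y\<bar> = sqrt ((ip x y)\<^sup>2)" by simp
  also have "\<dots> \<le> sqrt (ip x x * ip y y)" using Cauchy_Schwarz real_sqrt_le_mono by blast
  finally show ?thesis by (simp add: ip_norm_def real_sqrt_mult)
qed

lemma angle_eq_iff:
  assumes "x \<noteq> 0" "y \<noteq> 0" "0 \<le> \<theta>" "\<theta> \<le> pi"
  shows "ip_angle ip x y = \<theta> \<longleftrightarrow> ip x y = cos \<theta> * ip_norm ip x * ip_norm ip y"
proof -
  have norms: "ip_norm ip x > 0" "ip_norm ip y > 0" using norm_pos assms by auto
  define r where "r = ip x y / (ip_norm ip x * ip_norm ip y)"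
  have "-1 \<le> r" "r \<le> 1"
    using abs_le_norm_mult[of x y] norms by (auto simp: r_def divide_le_eq le_divide_eq abs_le_iff)
  then have "ip_angle ip x y = \<theta> \<longleftrightarrow> r = cos \<theta>"
    unfolding ip_angle_def r_def[symmetric] using assms cos_arccos arccos_cos by metis
  also have "\<dots> \<longleftrightarrow> ip x y = cos \<theta> * ip_norm ip x * ip_norm ip y"
    using norms by (auto simp: r_def field_simps)
  finally show ?thesis .
qed

lemma polarization: "ip x y = (ip (x + y) (x + y) - ip x x - ip y y) / 2"
  using combination_expand[of 1 x 1 y 1 1] by simp

lemma cos_partner_nonzero: "cos_partner ip a x y \<Longrightarrow> x \<noteq> 0 \<Longrightarrow> y \<noteq> 0"
  unfolding cos_partner_def using self_pos zero_left by force

lemma cos_partner_cos_angle: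
  "cos_partner ip a x y \<Longrightarrow> ip x y = a * ip_norm ip x * ip_norm ip y"
  unfolding cos_partner_def ip_norm_def by (simp add: self_nonneg)

end

lemma proportional_if_quadratic_forms_proportional:
  assumes "inner_product_form ip1" "inner_product_form ip2"
    and "\<And>x. ip2 x x = c * ip1 x x"
  shows "ip2 x y = c * ip1 x y"
proof -
  have "ip1 (x + y) (x + y) = ip1 x x + ip1 y y + 2 * ip1 x y"
    using inner_product_form.polarization[OF assms(1), of x y] by simp
  then show ?thesis
    using inner_product_form.polarization[OF assms(2), of x y] assms(3) by (simp add: algebra_simps)
qed

text \<open>The hypothesis of the theorem, with the angle replaced by its cosine \<open>a\<close>; the
  bound \<open>a\<^sup>2 < 1\<close> encodes \<open>0 < \<theta>\<^sub>0 < \<pi>\<close>.\<close>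

locale cos_angle_preserving =
  ip1: inner_product_form ip1 + ip2: inner_product_form ip2
  for ip1 ip2 :: "'a::real_vector \<Rightarrow> 'a \<Rightarrow> real" +
  fixes a :: real
  assumes cos_bound: "a\<^sup>2 < 1"
    and same_cos_angle: "x \<noteq> 0 \<Longrightarrow> y \<noteq> 0 \<Longrightarrow>
      ip1 x y = a * ip_norm ip1 x * ip_norm ip1 y \<longleftrightarrow> ip2 x y = a * ip_norm ip2 x * ip_norm ip2 y"
begin

lemma cos_angle_transfer:
  assumes "x \<noteq> 0" "cos_partner ip1 a x y"
  shows "ip2 x y = a * ip_norm ip2 x * ip_norm ip2 y"
  using same_cos_angle ip1.cos_partner_nonzero ip1.cos_partner_cos_angle assms by blast

lemma cos_partner_orthogonal_case:
  assumes "a = 0" and x: "x \<noteq> 0" and partner: "cos_partner ip1 a x y"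
  shows "ip2 y y = ip2 x x"
proof -
  text \<open>\<open>x + y\<close> and \<open>x - y\<close> are orthogonal for \<open>ip1\<close>, hence for \<open>ip2\<close>.\<close>
  have "ip1 (1 *\<^sub>R x + 1 *\<^sub>R y) (1 *\<^sub>R x + 1 *\<^sub>R y) \<noteq> 0"
    "ip1 (1 *\<^sub>R x + (-1) *\<^sub>R y) (1 *\<^sub>R x + (-1) *\<^sub>R y) \<noteq> 0"
    using ip1.self_pos[OF x] assms unfolding cos_partner_def ip1.combination_expand by simp_all
  moreover have "ip1 (1 *\<^sub>R x + 1 *\<^sub>R y) (1 *\<^sub>R x + (-1) *\<^sub>R y) = 0"
    using partner unfolding cos_partner_def ip1.combination_expand by simp
  ultimately have "ip2 (1 *\<^sub>R x + 1 *\<^sub>R y) (1 *\<^sub>R x + (-1) *\<^sub>R y) = 0"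
    using same_cos_angle \<open>a = 0\<close> by (metis ip1.self_eq_0_iff mult_zero_left)
  then show ?thesis unfolding ip2.combination_expand by simp
qed

lemma cos_partner_oblique_case:
  assumes "a \<noteq> 0" and x: "x \<noteq> 0" and partner: "cos_partner ip1 a x y"
  shows "ip2 y y = ip2 x x"
proof -
  text \<open>The reflection \<open>y' = 2a x - y\<close> of \<open>y\<close> in the line through \<open>x\<close> is another
    partner of \<open>x\<close>; comparing the two angles in \<open>ip2\<close> forces equal \<open>ip2\<close>-norms.\<close>
  define y' where "y' = (2 * a) *\<^sub>R x + (-1) *\<^sub>R y"
  define P Q R where "P = ip_norm ip2 x" and "Q = ip_norm ip2 y" and "R = ip_norm ip2 y'"
  have P: "P > 0" "P\<^sup>2 = ip2 x x" and Q: "Q\<^sup>2 = ip2 y y" and R: "R\<^sup>2 = ip2 y' y'"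
    using x by (simp_all add: P_def Q_def R_def ip2.norm_pos ip2.power2_norm)
  have "cos_partner ip1 a x y'"
    unfolding cos_partner_def y'_def ip1.combination_expand
    using partner[unfolded cos_partner_def] ip1.combination_expand[of 1 x 0 y "2 * a" "-1"]
    by (simp add: algebra_simps power2_eq_square)
  then have "ip2 x y' = a * P * R"
    using cos_angle_transfer[OF x] by (simp add: P_def R_def)
  moreover have "ip2 x y' = 2 * a * ip2 x x - ip2 x y"
    using ip2.combination_expand[of 1 x 0 y "2 * a" "-1"] unfolding y'_def
    by (simp add: algebra_simps)
  moreover have xy: "ip2 x y = a * P * Q"
    using cos_angle_transfer[OF x partner] by (simp add: P_def Q_def)
  ultimately have "a * P * (R - (2 * P - Q)) = 0"
    using P(2)[symmetric] by (simp add: algebra_simps power2_eq_square)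
  then have R_eq: "R = 2 * P - Q" using \<open>a \<noteq> 0\<close> P by simp
  have "ip2 y' y' = 4 * a\<^sup>2 * ip2 x x - 4 * a * ip2 x y + ip2 y y"
    unfolding y'_def ip2.combination_expand by (simp add: algebra_simps power2_eq_square)
  then have "(2 * P - Q)\<^sup>2 = 4 * a\<^sup>2 * P\<^sup>2 - 4 * a * (a * P * Q) + Q\<^sup>2"
    by (simp only: R[symmetric] P(2)[symmetric] Q[symmetric] xy R_eq)
  then have "4 * (1 - a\<^sup>2) * P * (P - Q) = 0"
    by (simp add: algebra_simps power2_eq_square)
  then show ?thesis using cos_bound P Q by simp
qed

lemma cos_partner_transfer:
  assumes x: "x \<noteq> 0" and partner: "cos_partner ip1 a x y"
  shows "cos_partner ip2 a x y"
proof -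
  have "ip2 y y = ip2 x x"
    using cos_partner_orthogonal_case cos_partner_oblique_case assms by blast
  then have "ip_norm ip2 y = ip_norm ip2 x" by (simp add: ip_norm_def)
  then show ?thesis
    using \<open>ip2 y y = ip2 x x\<close> cos_angle_transfer[OF assms] ip2.power2_norm[of x]
    by (simp add: cos_partner_def power2_eq_square)
qed

lemma exists_cos_partner_orthogonal:
  assumes x: "x \<noteq> 0" and w: "w \<noteq> 0" and orth: "ip1 x w = 0"
  obtains b where "b > 0" "cos_partner ip1 a x (a *\<^sub>R x + b *\<^sub>R w)"
proof
  have pos: "ip1 x x > 0" "ip1 w w > 0" using x w ip1.self_pos by auto
  define b where "b = sqrt ((1 - a\<^sup>2) * ip1 x x / ip1 w w)"
  show "b > 0" using cos_bound pos by (simp add: b_def)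
  have "b\<^sup>2 * ip1 w w = (1 - a\<^sup>2) * ip1 x x"
    using cos_bound pos by (simp add: b_def)
  then show "cos_partner ip1 a x (a *\<^sub>R x + b *\<^sub>R w)"
    unfolding cos_partner_def ip1.combination_expand
    using ip1.combination_expand[of 1 x 0 w a b] orth by (simp add: power2_eq_square algebra_simps)
qed

lemma quadratic_ratio_eq:
  assumes x: "x \<noteq> 0"
  shows "ip2 z z * ip1 x x = ip2 x x * ip1 z z"
proof -
  have pos: "ip1 x x > 0" using ip1.self_pos x by simp
  define t where "t = ip1 x z / ip1 x x"
  define w where "w = z - t *\<^sub>R x"
  have z: "z = t *\<^sub>R x + 1 *\<^sub>R w" by (simp add: w_def)
  have orth: "ip1 x w = 0"
    using pos by (simp add: w_def t_def ip1.diff_right ip1.scaleR_right ip1.commute[of z x])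
  show ?thesis
  proof (cases "w = 0")
    case True
    then show ?thesis
      using ip1.combination_expand[of t x 0 x t 0] ip2.combination_expand[of t x 0 x t 0]
      by (simp add: z)
  next
    case False
    then obtain b where b: "b > 0" and partner: "cos_partner ip1 a x (a *\<^sub>R x + b *\<^sub>R w)"
      using exists_cos_partner_orthogonal[OF x _ orth] by blast
    define y where "y = a *\<^sub>R x + b *\<^sub>R w"
    define k where "k = ip2 x x / ip1 x x"
    have k: "ip2 x x = k * ip1 x x" "ip2 y y = k * ip1 y y" "ip2 x y = k * ip1 x y"
      using pos partner cos_partner_transfer[OF x partner]
      by (simp_all add: k_def cos_partner_def flip: y_def)
    have "z = (t - a / b) *\<^sub>R x + (1 / b) *\<^sub>R y"
      using b by (simp add: z y_def algebra_simps)
    then have "ip2 z z = k * ip1 z z"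
      by (simp only: ip1.combination_expand ip2.combination_expand k) (simp add: algebra_simps)
    then show ?thesis using k by simp
  qed
qed

theorem proportional: "\<exists>c>0. \<forall>x y. ip2 x y = c * ip1 x y"
proof (cases "\<exists>e::'a. e \<noteq> 0")
  case False
  then have "x = 0" for x :: 'a by blast
  then show ?thesis by (metis ip1.zero_left ip2.zero_left mult_1 zero_less_one)
next
  case True
  then obtain e :: 'a where e: "e \<noteq> 0" by blast
  define c where "c = ip2 e e / ip1 e e"
  have pos: "ip1 e e > 0" "ip2 e e > 0" using e ip1.self_pos ip2.self_pos by auto
  have "ip2 x x = c * ip1 x x" for x
    using quadratic_ratio_eq[OF e, of x] pos by (simp add: c_def field_simps)
  then have "ip2 x y = c * ip1 x y" for x y
    by (rule proportional_if_quadratic_forms_proportional[OF ip1.inner_product_form_axioms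
          ip2.inner_product_form_axioms])
  moreover have "c > 0" using pos by (simp add: c_def)
  ultimately show ?thesis by blast
qed

end

theorem mainTheorem5:
  fixes ip1 ip2 :: "'a::real_vector \<Rightarrow> 'a \<Rightarrow> real" and \<theta>0 :: real
  assumes "is_inner_product ip1" and "is_inner_product ip2"
    and "0 < \<theta>0" and "\<theta>0 < pi"
    and "\<And>x y. x \<noteq> 0 \<Longrightarrow> y \<noteq> 0 \<Longrightarrow>
            (ip_angle ip1 x y = \<theta>0 \<longleftrightarrow> ip_angle ip2 x y = \<theta>0)"
  shows "\<exists>c>0. \<forall>x y. ip2 x y = c * ip1 x y"
proof -
  interpret ip1: inner_product_form ip1 by unfold_locales (fact assms(1))
  interpret ip2: inner_product_form ip2 by unfold_locales (fact assms(2))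
  have cos_bound: "(cos \<theta>0)\<^sup>2 < 1"
    using sin_gt_zero[OF assms(3,4)] sin_cos_squared_add[of \<theta>0] by (smt (verit) zero_less_power)
  have \<theta>0: "0 \<le> \<theta>0" "\<theta>0 \<le> pi" using assms(3,4) by simp_all
  have same_cos_angle: "ip1 x y = cos \<theta>0 * ip_norm ip1 x * ip_norm ip1 y
      \<longleftrightarrow> ip2 x y = cos \<theta>0 * ip_norm ip2 x * ip_norm ip2 y" if "x \<noteq> 0" "y \<noteq> 0" for x y
    using ip1.angle_eq_iff[OF that \<theta>0] ip2.angle_eq_iff[OF that \<theta>0] assms(5)[OF that] by simp
  interpret cos_angle_preserving ip1 ip2 "cos \<theta>0"
    by unfold_locales (fact cos_bound, fact same_cos_angle)
  show ?thesis by (rule proportional)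
qed

end
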